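(* Let $p(\mathbf x)=W_2\rho_{r_1}(W_1\mathbf x)$ be a two-layer hPNN with architecture $((d_0,d_1,d_2),(r_1))$, $d_0,d_1,d_2\ge 2$, $r_1\ge 2$, such that $\operatorname{krank}(W_2)\ge 2$, $\operatorname{krank}(W_1^T)\ge 2$ and $$r_1\ \ge\ 2\left\lceil\frac{2d_1-\operatorname{krank}(W_2)}{2\operatorname{krank}(W_1^T)-2}\right\rceil.$$ Then the representation $(W_1,W_2)$ of $p$ is unique.
   Context: Work over $\mathbb R$. $\rho_r(z_1,\dots,z_d)=(z_1^r,\dots,z_d^r)$. A two-layer hPNN with architecture $((d_0,d_1,d_2),(r_1))$ and weights $(W_1,W_2)$, $W_1\in\mathbb R^{d_1\times d_0}$, $W_2\in\mathbb R^{d_2\times d_1}$, is the map $\mathbf x\mapsto W_2\rho_{r_1}(W_1\mathbf x)$. Weights $(W_1',W_2')$ are equivalent to $(W_1,W_2)$ if $W_1'=PDW_1$ and $W_2'=W_2D^{-r_1}P^T$ for some permutation matrix $P$ and invertible diagonal matrix $D$. The representation is unique if every weight pair of the same architecture defining the same function is equivalent to it. The Kruskal rank $\operatorname{krank}(A)$ of a matrix $A$ is the largest integer $k$ such that every set of $k$ columns of $A$ is linearly independent. *)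

theory Defs
  imports "HOL-Analysis.Analysis"
begin

definition rho :: "nat \<Rightarrow> real^'n \<Rightarrow> real^'n" where
  "rho r z = (\<chi> i. (z $ i) ^ r)"

definition hpnn2 :: "real^'d0^'d1 \<Rightarrow> real^'d1^'d2 \<Rightarrow> nat \<Rightarrow> real^'d0 \<Rightarrow> real^'d2" where
  "hpnn2 W1 W2 r x = W2 *v rho r (W1 *v x)"

definition krank :: "real^'c^'m \<Rightarrow> nat" where
  "krank A = Max {k. k \<le> CARD('c) \<and>
     (\<forall>S::'c set. card S = k \<longrightarrow>
        inj_on (\<lambda>j. column j A) S \<and> independent ((\<lambda>j. column j A) ` S))}"

definition diagm :: "real^'n \<Rightarrow> real^'n^'n" where
  "diagm d = (\<chi> i j. if i = j then d $ i else 0)"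

definition perm_matrix :: "real^'n^'n \<Rightarrow> bool" where
  "perm_matrix P \<longleftrightarrow> (\<exists>\<sigma>. \<sigma> permutes (UNIV::'n set) \<and>
      P = (\<chi> i j. if j = \<sigma> i then 1 else 0))"

definition hpnn2_equiv :: "nat \<Rightarrow> real^'d0^'d1 \<Rightarrow> real^'d1^'d2 \<Rightarrow> real^'d0^'d1 \<Rightarrow> real^'d1^'d2 \<Rightarrow> bool" where
  "hpnn2_equiv r W1' W2' W1 W2 \<longleftrightarrow>
     (\<exists>P d. perm_matrix P \<and> (\<forall>i. d $ i \<noteq> 0) \<and>
        W1' = P ** diagm d ** W1 \<and>
        W2' = W2 ** diagm (\<chi> i. inverse (d $ i) ^ r) ** transpose P)"

definition hpnn2_unique :: "nat \<Rightarrow> real^'d0^'d1 \<Rightarrow> real^'d1^'d2 \<Rightarrow> bool" where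
  "hpnn2_unique r W1 W2 \<longleftrightarrow>
     (\<forall>(W1'::real^'d0^'d1) (W2'::real^'d1^'d2).
        hpnn2 W1' W2' r = hpnn2 W1 W2 r \<longrightarrow> hpnn2_equiv r W1' W2' W1 W2)"

end

(* Write the network as the vector power sum p(x) = \<Sum>j a_j (w_j \<bullet> x)^r, where the w_j are the
   rows of W1 and the a_j the columns of W2, and let m_j, b_j be the data of a second
   representation of p. Differentiating the identity in directions y_1, ..., y_t multiplies
   each summand by \<Prod>s (y_s \<bullet> w_j) and lowers the degree; by the Kruskal ranks, directions and a
   functional on the a_j can be chosen so that all but a prescribed few summands vanish.
   With the bound on r this shows that for every z, the number of i with z \<bullet> m_i \<noteq> 0 is at least
   min (#{j. z \<bullet> w_j \<noteq> 0}, d1 + 2 - krank W1^T). This is the hypothesis of (a variant of)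
   Kruskal's permutation lemma, which gives m_i = c_i w_(\<pi> i) for a permutation \<pi>; linear
   independence of the powers (w_j \<bullet> x)^r then forces c_i^r b_i = a_(\<pi> i). *)

theory Submission
  imports Defs
begin

section \<open>Separating linear forms\<close>

lemma exists_orthogonal_to_not_orthogonal:
  fixes v :: "'a::euclidean_space"
  assumes "v \<notin> span S"
  obtains y where "\<forall>s\<in>S. y \<bullet> s = 0" "y \<bullet> v \<noteq> 0"
proof -
  obtain p q where p: "p \<in> span S" and q: "\<And>u. u \<in> span S \<Longrightarrow> orthogonal q u"
    and v: "v = p + q"
    using orthogonal_subspace_decomp_exists by blast
  have "q \<noteq> 0" using assms p v by auto
  have "q \<bullet> v = q \<bullet> q" using q[OF p] v by (simp add: inner_add_right orthogonal_def)
  then have "q \<bullet> v \<noteq> 0" using \<open>q \<noteq> 0\<close> by simp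
  moreover have "\<forall>s\<in>S. q \<bullet> s = 0" using q span_base orthogonal_def by blast
  ultimately show thesis using that by blast
qed

lemma exists_orthogonal_to_avoiding:
  fixes F :: "'a::euclidean_space set"
  assumes "finite F" "\<forall>v\<in>F. v \<notin> span S"
  shows "\<exists>z. (\<forall>s\<in>S. z \<bullet> s = 0) \<and> (\<forall>v\<in>F. z \<bullet> v \<noteq> 0)"
  using assms
proof (induction F rule: finite_induct)
  case empty
  show ?case by (rule exI[of _ 0]) simp
next
  case (insert v F)
  then obtain z where z1: "\<forall>s\<in>S. z \<bullet> s = 0" and z2: "\<forall>f\<in>F. z \<bullet> f \<noteq> 0" by auto
  obtain y where y1: "\<forall>s\<in>S. y \<bullet> s = 0" and y2: "y \<bullet> v \<noteq> 0"
    using exists_orthogonal_to_not_orthogonal insert.prems by blast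
  \<comment> \<open>avoid the finitely many values of c for which z + c y is orthogonal to some f\<close>
  let ?B = "(\<lambda>f. - (z \<bullet> f) / (y \<bullet> f)) ` insert v F"
  obtain c where c: "c \<notin> ?B"
    using ex_new_if_finite[of ?B] infinite_UNIV_char_0 insert.hyps by blast
  have "(z + c *\<^sub>R y) \<bullet> f \<noteq> 0" if f: "f \<in> insert v F" for f
  proof
    assume "(z + c *\<^sub>R y) \<bullet> f = 0"
    then have h: "z \<bullet> f + c * (y \<bullet> f) = 0" by (simp add: inner_add_left)
    show False
    proof (cases "y \<bullet> f = 0")
      case True
      then show False using h f y2 z2 by auto
    next
      case False
      then have "c = - (z \<bullet> f) / (y \<bullet> f)" using h by (simp add: field_simps)
      then show False using c f by auto
    qed
  qed
  moreover have "\<forall>s\<in>S. (z + c *\<^sub>R y) \<bullet> s = 0" using z1 y1 by (simp add: inner_add_left)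
  ultimately show ?case by blast
qed

definition kruskal_indep :: "nat \<Rightarrow> ('j \<Rightarrow> 'a::real_vector) \<Rightarrow> bool" where
  "kruskal_indep k w \<longleftrightarrow>
     (\<forall>S. finite S \<and> card S \<le> k \<longrightarrow> inj_on w S \<and> independent (w ` S))"

lemma kruskal_indepD:
  "kruskal_indep k w \<Longrightarrow> finite S \<Longrightarrow> card S \<le> k \<Longrightarrow> inj_on w S \<and> independent (w ` S)"
  unfolding kruskal_indep_def by blast

lemma kruskal_indep_comp:
  fixes \<pi> :: "'i \<Rightarrow> 'j"
  assumes "kruskal_indep k w" "inj \<pi>"
  shows "kruskal_indep k (w \<circ> \<pi>)"
  unfolding kruskal_indep_def
proof (intro allI impI)
  fix S :: "'i set" assume S: "finite S \<and> card S \<le> k"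
  have "card (\<pi> ` S) = card S" using assms(2) by (simp add: card_image inj_on_subset)
  then have "inj_on w (\<pi> ` S) \<and> independent (w ` \<pi> ` S)"
    using kruskal_indepD[OF assms(1)] S by simp
  then show "inj_on (w \<circ> \<pi>) S \<and> independent ((w \<circ> \<pi>) ` S)"
    using assms(2) by (simp add: comp_inj_on inj_on_subset image_comp)
qed

lemma kruskal_indep_nonzero:
  assumes "kruskal_indep k w" "1 \<le> k"
  shows "w j \<noteq> 0"
  using kruskal_indepD[OF assms(1), of "{j}"] assms(2) dependent_zero by force

lemma kruskal_indep_separate:
  fixes w :: "'j \<Rightarrow> 'a::euclidean_space"
  assumes "kruskal_indep k w" "finite K" "card K < k" "j0 \<notin> K"
  obtains y where "\<forall>j\<in>K. y \<bullet> w j = 0" "y \<bullet> w j0 \<noteq> 0"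
proof -
  have "inj_on w (insert j0 K)" and ind: "independent (w ` insert j0 K)"
    using kruskal_indepD[OF assms(1), of "insert j0 K"] assms(2-4) by simp_all
  then have "w j0 \<notin> w ` K"
    using assms(4) by (auto simp: inj_on_def)
  with ind have "w j0 \<notin> span (w ` K)"
    by (simp add: independent_insert)
  then obtain y where "\<forall>s\<in>w ` K. y \<bullet> s = 0" "y \<bullet> w j0 \<noteq> 0"
    by (rule exists_orthogonal_to_not_orthogonal)
  then show thesis using that by blast
qed

definition prod_inner :: "'a::real_inner list \<Rightarrow> 'a \<Rightarrow> real" where
  "prod_inner ys u = (\<Prod>y\<leftarrow>ys. y \<bullet> u)"

lemma prod_inner_Nil [simp]: "prod_inner [] u = 1"
  by (simp add: prod_inner_def)

lemma prod_inner_Cons [simp]: "prod_inner (y # ys) u = (y \<bullet> u) * prod_inner ys u"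
  by (simp add: prod_inner_def)

lemma kruskal_indep_separate_prod:
  fixes w :: "'j \<Rightarrow> 'a::euclidean_space"
  assumes "kruskal_indep k w" "1 \<le> k" "finite K" "card K \<le> e * (k - 1)" "j0 \<notin> K"
  shows "\<exists>ys. length ys = e \<and> (\<forall>j\<in>K. prod_inner ys (w j) = 0) \<and> prod_inner ys (w j0) \<noteq> 0"
  using assms(3-5)
proof (induction e arbitrary: K)
  case 0
  then show ?case by (intro exI[of _ "[]"]) simp
next
  case (Suc e)
  have "min (card K) (k - 1) \<le> card K" by simp
  then obtain K1 where K1: "K1 \<subseteq> K" "card K1 = min (card K) (k - 1)" "finite K1"
    by (rule obtain_subset_with_card_n)
  have "card K1 < k" "j0 \<notin> K1" using K1 Suc.prems assms(2) by auto
  then obtain y where y1: "\<forall>j\<in>K1. y \<bullet> w j = 0" and y2: "y \<bullet> w j0 \<noteq> 0"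
    by (rule kruskal_indep_separate[OF assms(1) \<open>finite K1\<close>])
  have "card (K - K1) \<le> e * (k - 1)"
    using K1 Suc.prems by (auto simp: card_Diff_subset min_def)
  then obtain ys where "length ys = e" "\<forall>j\<in>K - K1. prod_inner ys (w j) = 0"
    "prod_inner ys (w j0) \<noteq> 0"
    using Suc.IH Suc.prems by blast
  with y1 y2 show ?case by (intro exI[of _ "y # ys"]) auto
qed

section \<open>Identities between power sums of linear forms\<close>

lemma has_real_derivative_power_sum_line:
  fixes u :: "'j \<Rightarrow> 'a::real_inner"
  shows "((\<lambda>h. \<Sum>j\<in>A. c j * (u j \<bullet> (x + h *\<^sub>R y)) ^ Suc N) has_real_derivative
          (\<Sum>j\<in>A. c j * (of_nat (Suc N) * ((u j \<bullet> y) * (u j \<bullet> x) ^ N)))) (at 0)"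
proof -
  have line: "((\<lambda>h. u j \<bullet> x + h * (u j \<bullet> y)) has_real_derivative (u j \<bullet> y)) (at 0)" for j
    using DERIV_add[OF DERIV_const[of "u j \<bullet> x"] DERIV_cmult_Id[of "u j \<bullet> y"]]
    by (simp add: mult.commute)
  have "((\<lambda>h. \<Sum>j\<in>A. c j * (u j \<bullet> x + h * (u j \<bullet> y)) ^ Suc N) has_real_derivative
          (\<Sum>j\<in>A. c j * (of_nat (Suc N) *
            ((u j \<bullet> y) * (u j \<bullet> x + 0 * (u j \<bullet> y)) ^ (Suc N - Suc 0))))) (at 0)"
    by (intro DERIV_sum DERIV_cmult DERIV_power line)
  then show ?thesis by (simp add: inner_add_right)
qed

lemma power_sum_eq_contract:
  fixes u :: "'j \<Rightarrow> 'a::real_inner" and v :: "'i \<Rightarrow> 'a"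
  assumes "\<And>x. (\<Sum>j\<in>A. c j * (u j \<bullet> x) ^ Suc N) = (\<Sum>i\<in>B. d i * (v i \<bullet> x) ^ Suc N)"
  shows "(\<Sum>j\<in>A. c j * (y \<bullet> u j) * (u j \<bullet> x) ^ N) = (\<Sum>i\<in>B. d i * (y \<bullet> v i) * (v i \<bullet> x) ^ N)"
proof -
  have eq: "(\<lambda>h. \<Sum>j\<in>A. c j * (u j \<bullet> (x + h *\<^sub>R y)) ^ Suc N) =
        (\<lambda>h. \<Sum>i\<in>B. d i * (v i \<bullet> (x + h *\<^sub>R y)) ^ Suc N)"
    using assms by auto
  have "(\<Sum>j\<in>A. c j * (of_nat (Suc N) * ((u j \<bullet> y) * (u j \<bullet> x) ^ N))) =
        (\<Sum>i\<in>B. d i * (of_nat (Suc N) * ((v i \<bullet> y) * (v i \<bullet> x) ^ N)))"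
    by (rule DERIV_unique[OF has_real_derivative_power_sum_line[of c u x y N A, unfolded eq]
          has_real_derivative_power_sum_line])
  then have "of_nat (Suc N) * (\<Sum>j\<in>A. c j * (y \<bullet> u j) * (u j \<bullet> x) ^ N) =
        of_nat (Suc N) * (\<Sum>i\<in>B. d i * (y \<bullet> v i) * (v i \<bullet> x) ^ N)"
    by (simp add: sum_distrib_left algebra_simps inner_commute)
  then show ?thesis by simp
qed

lemma power_sum_eq_contract_prod:
  fixes u :: "'j \<Rightarrow> 'a::real_inner" and v :: "'i \<Rightarrow> 'a"
  assumes "\<And>x. (\<Sum>j\<in>A. c j * (u j \<bullet> x) ^ N) = (\<Sum>i\<in>B. d i * (v i \<bullet> x) ^ N)"
    and "length ys \<le> N"
  shows "(\<Sum>j\<in>A. c j * prod_inner ys (u j) * (u j \<bullet> x) ^ (N - length ys)) =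
         (\<Sum>i\<in>B. d i * prod_inner ys (v i) * (v i \<bullet> x) ^ (N - length ys))"
  using assms(2)
proof (induction ys arbitrary: x)
  case Nil
  then show ?case using assms(1) by simp
next
  case (Cons y ys)
  then have "N - length ys = Suc (N - length (y # ys))" by simp
  with Cons have "(\<Sum>j\<in>A. c j * prod_inner ys (u j) * (u j \<bullet> x') ^ Suc (N - length (y # ys))) =
      (\<Sum>i\<in>B. d i * prod_inner ys (v i) * (v i \<bullet> x') ^ Suc (N - length (y # ys)))" for x'
    by simp
  from power_sum_eq_contract[OF this, of y x] show ?case
    by (simp add: mult_ac)
qed

lemma power_sum_zero_imp_coeffs_zero:
  fixes w :: "'j \<Rightarrow> 'a::euclidean_space"
  assumes "kruskal_indep k w" "1 \<le> k" "finite S" "card S \<le> n * (k - 1) + 1"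
    and "\<And>x. (\<Sum>j\<in>S. c j * (w j \<bullet> x) ^ n) = 0"
    and "j0 \<in> S"
  shows "c j0 = 0"
  using assms(3-6)
proof (induction n arbitrary: S c)
  case 0
  then have "card S \<le> Suc 0" by simp
  with "0.prems"(1,4) have "S = {j0}" by (auto simp: card_le_Suc0_iff_eq)
  then show ?case using "0.prems"(3)[of 0] by simp
next
  case (Suc n)
  \<comment> \<open>contract with a y killing k - 1 other summands, then apply the induction hypothesis\<close>
  have "min (card S - 1) (k - 1) \<le> card (S - {j0})" using Suc.prems(1,4) by simp
  then obtain T where T: "T \<subseteq> S - {j0}" "card T = min (card S - 1) (k - 1)" and fT: "finite T"
    by (rule obtain_subset_with_card_n)
  have "card T < k" "j0 \<notin> T" using T assms(2) by auto
  then obtain y where y1: "\<forall>j\<in>T. y \<bullet> w j = 0" and y2: "y \<bullet> w j0 \<noteq> 0"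
    by (rule kruskal_indep_separate[OF assms(1) fT])
  have "(\<Sum>j\<in>S. c j * (y \<bullet> w j) * (w j \<bullet> x) ^ n) =
      (\<Sum>j\<in>{}. 0 * (y \<bullet> w j) * (w j \<bullet> x) ^ n)" for x
    by (rule power_sum_eq_contract) (use Suc.prems(3) in simp)
  moreover have "(\<Sum>j\<in>S. c j * (y \<bullet> w j) * (w j \<bullet> x) ^ n) =
      (\<Sum>j\<in>S - T. c j * (y \<bullet> w j) * (w j \<bullet> x) ^ n)" for x
    by (rule sum.mono_neutral_right) (use T y1 Suc.prems(1) in auto)
  moreover have "card (S - T) \<le> n * (k - 1) + 1"
  proof -
    have "card (S - T) = card S - card T" using T(1) fT by (subst card_Diff_subset) auto
    moreover have "1 \<le> card S" using Suc.prems(1,4) card_0_eq by fastforce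
    ultimately show ?thesis using T(2) Suc.prems(2) by (auto simp: min_def)
  qed
  ultimately have "c j0 * (y \<bullet> w j0) = 0"
    using Suc.IH[of "S - T" "\<lambda>j. c j * (y \<bullet> w j)"] Suc.prems T by auto
  then show ?case using y2 by simp
qed

section \<open>A bound on the supports in a second decomposition\<close>

lemma card_le_card_if_independent_supported:
  fixes row :: "'k \<Rightarrow> real^'i"
  assumes fY: "finite Y"
    and indep: "\<And>g. (\<Sum>y\<in>Y. g y *\<^sub>R row y) = 0 \<Longrightarrow> \<forall>y\<in>Y. g y = 0"
    and supp: "\<And>y i. y \<in> Y \<Longrightarrow> i \<notin> I \<Longrightarrow> row y $ i = 0"
  shows "card Y \<le> card I"
proof -
  have inj: "inj_on row Y"
  proof (rule inj_onI, rule ccontr)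
    fix p q assume pq: "p \<in> Y" "q \<in> Y" "row p = row q" "p \<noteq> q"
    define g where "g y = (if y = p then 1 else if y = q then -1 else (0::real))" for y
    have "(\<Sum>y\<in>Y. g y *\<^sub>R row y) = (\<Sum>y\<in>{p,q}. g y *\<^sub>R row y)"
      by (rule sum.mono_neutral_right) (use fY pq in \<open>auto simp: g_def\<close>)
    also have "\<dots> = 0" using pq by (simp add: g_def)
    finally have "g p = 0" using indep pq by blast
    then show False by (simp add: g_def)
  qed
  have ind: "independent (row ` Y)"
  proof (rule independent_if_scalars_zero)
    show "finite (row ` Y)" using fY by simp
    fix f x assume s: "(\<Sum>x\<in>row ` Y. f x *\<^sub>R x) = 0" and x: "x \<in> row ` Y"
    have "(\<Sum>y\<in>Y. f (row y) *\<^sub>R row y) = 0" using s by (simp add: sum.reindex[OF inj])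
    then have "\<forall>y\<in>Y. f (row y) = 0" by (rule indep)
    then show "f x = 0" using x by auto
  qed
  have "row ` Y \<subseteq> span ((\<lambda>i. axis i (1::real)) ` I)"
  proof
    fix v assume "v \<in> row ` Y"
    then obtain y where y: "y \<in> Y" "v = row y" by auto
    have "v = (\<Sum>i\<in>UNIV. (v $ i) *\<^sub>R axis i 1)"
      by (simp add: vec_eq_iff axis_def sum.delta if_distrib cong: if_cong)
    also have "\<dots> = (\<Sum>i\<in>I. (v $ i) *\<^sub>R axis i 1)"
      by (rule sum.mono_neutral_right) (use y supp in auto)
    also have "\<dots> \<in> span ((\<lambda>i. axis i (1::real)) ` I)"
      by (intro span_sum span_mul span_base) auto
    finally show "v \<in> span ((\<lambda>i. axis i (1::real)) ` I)" .
  qed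
  then have "card (row ` Y) \<le> card ((\<lambda>i. axis i (1::real)) ` I)"
    using independent_span_bound[OF _ ind] by simp
  also have "\<dots> \<le> card I" by (rule card_image_le) simp
  finally show ?thesis using card_image[OF inj] by simp
qed

text \<open>The rows cR y are independent: a vanishing combination of them gives a vanishing power
  sum over X \<union> Y on the left, whose coefficient at y is a multiple of cL y y.\<close>

lemma card_le_support_if_triangular:
  fixes w :: "'j::finite \<Rightarrow> 'a::euclidean_space" and m :: "'i::finite \<Rightarrow> 'a"
  assumes KW: "kruskal_indep k w" "1 \<le> k"
    and XY: "card (X \<union> Y) \<le> n * (k - 1) + 1" "X \<inter> Y = {}"
    and eq: "\<And>y x. y \<in> Y \<Longrightarrow>
      (\<Sum>j\<in>UNIV. cL y j * (w j \<bullet> x) ^ n) = (\<Sum>i\<in>UNIV. cR y i * (m i \<bullet> x) ^ n)"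
    and cL0: "\<And>y j. y \<in> Y \<Longrightarrow> j \<notin> X \<Longrightarrow> j \<noteq> y \<Longrightarrow> cL y j = 0"
    and cLy: "\<And>y. y \<in> Y \<Longrightarrow> cL y y \<noteq> 0"
    and cR0: "\<And>y i. y \<in> Y \<Longrightarrow> i \<notin> I \<Longrightarrow> cR y i = 0"
  shows "card Y \<le> card I"
proof (rule card_le_card_if_independent_supported[where row = "\<lambda>y. \<chi> i. cR y i"])
  show "finite Y" by simp
  show "(\<chi> i. cR y i) $ i = 0" if "y \<in> Y" "i \<notin> I" for y i using cR0 that by simp
  fix g assume g: "(\<Sum>y\<in>Y. g y *\<^sub>R (\<chi> i. cR y i)) = 0"
  have gi: "(\<Sum>y\<in>Y. g y * cR y i) = 0" for i
    using arg_cong[OF g, of "\<lambda>v. v $ i"] by simp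
  define D where "D j = (\<Sum>y\<in>Y. g y * cL y j)" for j
  have "(\<Sum>j\<in>X \<union> Y. D j * (w j \<bullet> x) ^ n) = 0" for x
  proof -
    have "(\<Sum>j\<in>X \<union> Y. D j * (w j \<bullet> x) ^ n) = (\<Sum>j\<in>UNIV. D j * (w j \<bullet> x) ^ n)"
    proof (rule sum.mono_neutral_left)
      show "\<forall>j\<in>UNIV - (X \<union> Y). D j * (w j \<bullet> x) ^ n = 0"
      proof
        fix j assume j: "j \<in> UNIV - (X \<union> Y)"
        then have "cL y j = 0" if "y \<in> Y" for y using cL0 that by auto
        then show "D j * (w j \<bullet> x) ^ n = 0" unfolding D_def by simp
      qed
    qed auto
    also have "\<dots> = (\<Sum>y\<in>Y. g y * (\<Sum>j\<in>UNIV. cL y j * (w j \<bullet> x) ^ n))"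
      unfolding D_def by (simp add: sum_distrib_left sum_distrib_right sum.swap[of _ Y] mult.assoc)
    also have "\<dots> = (\<Sum>y\<in>Y. g y * (\<Sum>i\<in>UNIV. cR y i * (m i \<bullet> x) ^ n))"
      using eq by simp
    also have "\<dots> = (\<Sum>i\<in>UNIV. (\<Sum>y\<in>Y. g y * cR y i) * (m i \<bullet> x) ^ n)"
      by (simp add: sum_distrib_left sum_distrib_right sum.swap[of _ Y] mult.assoc)
    also have "\<dots> = 0" using gi by simp
    finally show ?thesis .
  qed
  then have "D y = 0" if "y \<in> Y" for y
    using power_sum_zero_imp_coeffs_zero[OF KW _ XY(1)] that by simp
  moreover have "D y = g y * cL y y" if "y \<in> Y" for y
  proof -
    have "D y = (\<Sum>y'\<in>{y}. g y' * cL y' y)" unfolding D_def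
      by (rule sum.mono_neutral_right) (use that XY(2) cL0 in auto)
    then show ?thesis by simp
  qed
  ultimately show "\<forall>y\<in>Y. g y = 0" using cLy by simp
qed

lemma exists_exponent_split:
  fixes R r k1 k2 :: nat
  assumes "2 \<le> k1" "k1 \<le> R" "k2 \<le> R" "2 * R \<le> r * (k1 - 1) + k2"
  obtains n e where "n + e + 1 = r" "R + 2 \<le> k2 + e * (k1 - 1) + k1"
    "R + 2 \<le> n * (k1 - 1) + 1 + k1" "2 * R + 2 \<le> (k2 + e * (k1 - 1)) + (n * (k1 - 1) + 1) + k1"
proof -
  define q where "q = k1 - 1"
  have q1: "1 \<le> q" using assms q_def by simp
  define n where "n = (R - 1) div q"
  have D: "n * q + (R - 1) mod q = R - 1" unfolding n_def by (rule div_mult_mod_eq)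
  have M: "(R - 1) mod q < q" using q1 by simp
  have B1: "n * q \<le> R - 1" using D by linarith
  have B2: "R - 1 < n * q + q" using D M by linarith
  have rq: "2 * R \<le> r * q + k2" using assms q_def by simp
  have "n < r"
  proof (rule ccontr)
    assume "\<not> n < r"
    then have "r * q \<le> n * q" using mult_le_mono1[of r n q] by linarith
    then show False using B1 rq assms q_def by linarith
  qed
  define e where "e = r - 1 - n"
  have ne: "n + e + 1 = r" using \<open>n < r\<close> e_def by simp
  then have C: "e * q + n * q + q = r * q" by (metis add_mult_distrib mult_1 add.commute)
  have "R + 2 \<le> k2 + e * q + k1" using C B1 B2 rq q_def assms by linarith
  moreover have "R + 2 \<le> n * q + 1 + k1" using B2 q_def assms by linarith
  moreover have "2 * R + 2 \<le> (k2 + e * q) + (n * q + 1) + k1" using C rq q_def assms by linarith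
  ultimately show thesis using that[OF ne] unfolding q_def by blast
qed

lemma exists_nested_subsets:
  assumes "finite J" "card J \<le> R" "k \<le> R"
    and "R + 2 \<le> P + k" "R + 2 \<le> Q + k" "2 * R + 2 \<le> P + Q + k"
  obtains X Y where "X \<subseteq> J" "Y \<subseteq> J - X" "card (X \<union> Y) \<le> Q" "card (J - X) \<le> P"
    "min (card J) (R + 2 - k) \<le> card Y"
proof -
  have "card J - min (card J) P \<le> card J" by simp
  then obtain X where X: "X \<subseteq> J" "card X = card J - min (card J) P" "finite X"
    by (rule obtain_subset_with_card_n)
  have cJX: "card (J - X) = min (card J) P" using X assms(1) by (simp add: card_Diff_subset)
  have XQ: "card X \<le> Q" using X assms by (auto simp: min_def)
  have "min (card (J - X)) (Q - card X) \<le> card (J - X)" by simp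
  then obtain Y where Y: "Y \<subseteq> J - X" "card Y = min (card (J - X)) (Q - card X)" "finite Y"
    by (rule obtain_subset_with_card_n)
  have "card (X \<union> Y) = card X + card Y" using X Y by (intro card_Un_disjoint) auto
  then have "card (X \<union> Y) \<le> Q" using Y XQ by simp
  moreover have "min (card J) (R + 2 - k) \<le> card Y" using Y X cJX assms by (auto simp: min_def)
  ultimately show thesis using that[OF X(1) Y(1)] cJX by simp
qed

lemma exists_separating_forms:
  fixes w :: "'j \<Rightarrow> 'a::euclidean_space" and a :: "'j \<Rightarrow> 'b::euclidean_space"
  assumes KW: "kruskal_indep k1 w" "1 \<le> k1" and KA: "kruskal_indep k2 a" "1 \<le> k2"
    and K: "finite K" "card K + 1 \<le> k2 + e * (k1 - 1)" "j0 \<notin> K"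
  shows "\<exists>l ys. length ys = e \<and> l \<bullet> a j0 \<noteq> 0 \<and> prod_inner ys (w j0) \<noteq> 0 \<and>
           (\<forall>j\<in>K. l \<bullet> a j = 0 \<or> prod_inner ys (w j) = 0)"
proof -
  have "min (card K) (k2 - 1) \<le> card K" by simp
  then obtain Ka where Ka: "Ka \<subseteq> K" "card Ka = min (card K) (k2 - 1)" "finite Ka"
    by (rule obtain_subset_with_card_n)
  have "card Ka < k2" "j0 \<notin> Ka" using Ka KA(2) K(3) by auto
  then obtain l where l1: "\<forall>j\<in>Ka. l \<bullet> a j = 0" and l2: "l \<bullet> a j0 \<noteq> 0"
    by (rule kruskal_indep_separate[OF KA(1) \<open>finite Ka\<close>])
  have "card (K - Ka) \<le> e * (k1 - 1)"
    using Ka K by (auto simp: card_Diff_subset min_def)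
  then obtain ys where "length ys = e" "\<forall>j\<in>K - Ka. prod_inner ys (w j) = 0"
    "prod_inner ys (w j0) \<noteq> 0"
    using kruskal_indep_separate_prod[OF KW] K by blast
  with l1 l2 show ?thesis by blast
qed

lemma exists_isolating_forms:
  fixes w :: "'j \<Rightarrow> 'a::euclidean_space" and a :: "'j \<Rightarrow> 'b::euclidean_space"
  assumes KW: "kruskal_indep k1 w" "1 \<le> k1" and KA: "kruskal_indep k2 a" "1 \<le> k2"
    and D: "finite D" "card D \<le> k2 + e * (k1 - 1)"
  obtains l ys where "\<And>y. y \<in> D \<Longrightarrow> length (ys y) = e"
    "\<And>y. y \<in> D \<Longrightarrow> l y \<bullet> a y \<noteq> 0" "\<And>y. y \<in> D \<Longrightarrow> prod_inner (ys y) (w y) \<noteq> 0"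
    "\<And>y j. y \<in> D \<Longrightarrow> j \<in> D \<Longrightarrow> j \<noteq> y \<Longrightarrow> l y \<bullet> a j = 0 \<or> prod_inner (ys y) (w j) = 0"
proof -
  define isolates where "isolates y l ys \<longleftrightarrow> length ys = e \<and> l \<bullet> a y \<noteq> 0 \<and>
    prod_inner ys (w y) \<noteq> 0 \<and> (\<forall>j\<in>D - {y}. l \<bullet> a j = 0 \<or> prod_inner ys (w j) = 0)" for y l ys
  have "\<forall>y\<in>D. \<exists>l ys. isolates y l ys"
  proof
    fix y assume "y \<in> D"
    with D(1) have "card D = Suc (card (D - {y}))" by (rule card.remove)
    with D(2) have card: "card (D - {y}) + 1 \<le> k2 + e * (k1 - 1)" by linarith
    show "\<exists>l ys. isolates y l ys"
      unfolding isolates_def by (rule exists_separating_forms[OF KW KA _ card]) (use D(1) in auto)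
  qed
  then obtain l ys where "\<And>y. y \<in> D \<Longrightarrow> isolates y (l y) (ys y)" by metis
  then show thesis using that unfolding isolates_def by blast
qed

definition kruskal_permutation_condition ::
    "nat \<Rightarrow> ('j::finite \<Rightarrow> 'a::real_inner) \<Rightarrow> ('j \<Rightarrow> 'a) \<Rightarrow> bool" where
  "kruskal_permutation_condition k w m \<longleftrightarrow>
     (\<forall>z. min (card {j. z \<bullet> w j \<noteq> 0}) (CARD('j) + 2 - k) \<le> card {i. z \<bullet> m i \<noteq> 0})"

text \<open>For each y in a large set Y of indices with z \<bullet> w y \<noteq> 0, contract the identity with z,
  with e linear forms and with a functional l so that on the left only y and a fixed small set
  X survive; the right-hand sides are then supported where z \<bullet> m i \<noteq> 0.\<close>

lemma kruskal_permutation_condition_if_power_sums_eq: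
  fixes w m :: "'j::finite \<Rightarrow> 'a::euclidean_space" and a b :: "'j \<Rightarrow> 'b::euclidean_space"
  assumes ID: "\<And>l x. (\<Sum>j\<in>UNIV. (l \<bullet> a j) * (w j \<bullet> x) ^ r) =
                     (\<Sum>j\<in>UNIV. (l \<bullet> b j) * (m j \<bullet> x) ^ r)"
    and KW: "kruskal_indep k1 w" and KA: "kruskal_indep k2 a"
    and k: "2 \<le> k1" "2 \<le> k2" "k1 \<le> CARD('j)" "k2 \<le> CARD('j)"
    and rk: "2 * CARD('j) \<le> r * (k1 - 1) + k2"
  shows "kruskal_permutation_condition k1 w m"
  unfolding kruskal_permutation_condition_def
proof
  fix z
  obtain n e where ne: "n + e + 1 = r" and PQ: "CARD('j) + 2 \<le> k2 + e * (k1 - 1) + k1"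
    "CARD('j) + 2 \<le> n * (k1 - 1) + 1 + k1"
    "2 * CARD('j) + 2 \<le> (k2 + e * (k1 - 1)) + (n * (k1 - 1) + 1) + k1"
    using exists_exponent_split[of k1 "CARD('j)" k2 r] k rk by auto
  define J where "J = {j. z \<bullet> w j \<noteq> 0}"
  have cJ: "card J \<le> CARD('j)" by (rule card_mono) auto
  obtain X Y where XY: "X \<subseteq> J" "Y \<subseteq> J - X" "card (X \<union> Y) \<le> n * (k1 - 1) + 1"
      "card (J - X) \<le> k2 + e * (k1 - 1)"
    and Ybig: "min (card J) (CARD('j) + 2 - k1) \<le> card Y"
    by (rule exists_nested_subsets[OF _ cJ k(3) PQ]) simp
  obtain l ys where sep: "\<And>y. y \<in> J - X \<Longrightarrow> length (ys y) = e"
    "\<And>y. y \<in> J - X \<Longrightarrow> l y \<bullet> a y \<noteq> 0" "\<And>y. y \<in> J - X \<Longrightarrow> prod_inner (ys y) (w y) \<noteq> 0"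
    "\<And>y j. y \<in> J - X \<Longrightarrow> j \<in> J - X \<Longrightarrow> j \<noteq> y \<Longrightarrow>
      l y \<bullet> a j = 0 \<or> prod_inner (ys y) (w j) = 0"
    by (rule exists_isolating_forms[OF KW _ KA _ _ XY(4)]) (use k in auto)
  define cL where "cL y j = (l y \<bullet> a j) * prod_inner (z # ys y) (w j)" for y j
  define cR where "cR y i = (l y \<bullet> b i) * prod_inner (z # ys y) (m i)" for y i
  have "card Y \<le> card {i. z \<bullet> m i \<noteq> 0}"
  proof (rule card_le_support_if_triangular[OF KW _ XY(3)])
    fix y x assume "y \<in> Y"
    then have len: "length (z # ys y) = e + 1" using sep(1) XY(2) by auto
    then have rn: "r - length (z # ys y) = n" using ne by simp
    have "(\<Sum>j\<in>UNIV. (l y \<bullet> a j) * prod_inner (z # ys y) (w j) *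
            (w j \<bullet> x) ^ (r - length (z # ys y))) =
          (\<Sum>i\<in>UNIV. (l y \<bullet> b i) * prod_inner (z # ys y) (m i) *
            (m i \<bullet> x) ^ (r - length (z # ys y)))"
      by (rule power_sum_eq_contract_prod) (use ID len ne in auto)
    then show "(\<Sum>j\<in>UNIV. cL y j * (w j \<bullet> x) ^ n) = (\<Sum>i\<in>UNIV. cR y i * (m i \<bullet> x) ^ n)"
      unfolding cL_def cR_def rn .
  next
    fix y j assume "y \<in> Y" "j \<notin> X" "j \<noteq> y"
    then show "cL y j = 0" using sep(4)[of y j] XY(2) unfolding cL_def J_def by auto
  next
    fix y assume "y \<in> Y"
    then show "cL y y \<noteq> 0" using sep(2,3)[of y] XY(2) unfolding cL_def J_def by auto
  qed (use XY k in \<open>auto simp: cR_def\<close>)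
  then show "min (card {j. z \<bullet> w j \<noteq> 0}) (CARD('j) + 2 - k1) \<le> card {i. z \<bullet> m i \<noteq> 0}"
    using Ybig unfolding J_def by simp
qed

section \<open>Kruskal's permutation lemma\<close>

text \<open>Summing the hypothesis over the p \<ge> 2 sets of the cover gives
  p MU + (CARD('j) - MU) \<le> p WU + (CARD('j) - WU) for the counts MU, WU of m and w in U.\<close>

lemma card_le_card_if_cover:
  fixes m w :: "'j::finite \<Rightarrow> 'a"
  assumes fin: "finite \<F>" and two: "2 \<le> card \<F>"
    and sub: "\<And>F. F \<in> \<F> \<Longrightarrow> U \<subseteq> F"
    and disj: "\<And>F G. F \<in> \<F> \<Longrightarrow> G \<in> \<F> \<Longrightarrow> F \<noteq> G \<Longrightarrow> F \<inter> G \<subseteq> U"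
    and cover: "\<And>i. m i \<notin> U \<Longrightarrow> \<exists>F\<in>\<F>. m i \<in> F"
    and le: "\<And>F. F \<in> \<F> \<Longrightarrow> card {i. m i \<in> F} \<le> card {j. w j \<in> F}"
  shows "card {i. m i \<in> U} \<le> card {j. w j \<in> U}"
proof -
  have split: "card {i. f i \<in> F} = card {i. f i \<in> U} + card {i. f i \<in> F - U}"
    if "F \<in> \<F>" for F and f :: "'j \<Rightarrow> 'a"
  proof -
    have "{i. f i \<in> F} = {i. f i \<in> U} \<union> {i. f i \<in> F - U}" using sub[OF that] by auto
    then show ?thesis by (simp only:) (rule card_Un_disjoint, auto)
  qed
  have outside: "(\<Sum>F\<in>\<F>. card {i. f i \<in> F - U}) = card (\<Union>F\<in>\<F>. {i. f i \<in> F - U})"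
    for f :: "'j \<Rightarrow> 'a"
    by (rule card_UN_disjoint[symmetric]) (use fin disj in auto)
  have compl: "card (UNIV - {i. f i \<in> U}) = CARD('j) - card {i. f i \<in> U}" for f :: "'j \<Rightarrow> 'a"
    by (rule card_Diff_subset) auto
  have "(\<Union>F\<in>\<F>. {i. m i \<in> F - U}) = UNIV - {i. m i \<in> U}" using cover sub by blast
  then have m_out: "(\<Sum>F\<in>\<F>. card {i. m i \<in> F - U}) = CARD('j) - card {i. m i \<in> U}"
    using outside compl by simp
  have "(\<Sum>F\<in>\<F>. card {j. w j \<in> F - U}) \<le> card (UNIV - {j. w j \<in> U})"
    unfolding outside by (rule card_mono) auto
  then have w_out: "(\<Sum>F\<in>\<F>. card {j. w j \<in> F - U}) \<le> CARD('j) - card {j. w j \<in> U}"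
    using compl by simp
  have "(\<Sum>F\<in>\<F>. card {i. m i \<in> U} + card {i. m i \<in> F - U}) \<le>
        (\<Sum>F\<in>\<F>. card {j. w j \<in> U} + card {j. w j \<in> F - U})"
    by (rule sum_mono) (use le split in metis)
  then have "card \<F> * card {i. m i \<in> U} + (CARD('j) - card {i. m i \<in> U}) \<le>
        card \<F> * card {j. w j \<in> U} + (CARD('j) - card {j. w j \<in> U})"
    using m_out w_out by (simp add: sum.distrib)
  moreover have "card {i. m i \<in> U} \<le> CARD('j)" "card {j. w j \<in> U} \<le> CARD('j)"
    by (auto intro: card_mono)
  ultimately have "(card \<F> - 1) * card {i. m i \<in> U} \<le> (card \<F> - 1) * card {j. w j \<in> U}"
    using two by (simp add: diff_mult_distrib)
  then show ?thesis using two by simp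
qed

lemma card_in_span_le_if_many:
  fixes w m :: "'j::finite \<Rightarrow> 'a::euclidean_space"
  assumes KEY: "kruskal_permutation_condition k w m"
    and many: "k - 1 \<le> card {i. m i \<in> span S}"
  shows "card {i. m i \<in> span S} \<le> card {j. w j \<in> span S}"
proof -
  obtain z where z: "\<forall>s\<in>S. z \<bullet> s = 0" "\<forall>v\<in>range m \<union> range w - span S. z \<bullet> v \<noteq> 0"
    using exists_orthogonal_to_avoiding[of "range m \<union> range w - span S" S] by auto
  have "z \<bullet> v = 0 \<longleftrightarrow> v \<in> span S" if "v \<in> range m \<union> range w" for v
    using z that orthogonal_to_span[of v S z] by (auto simp: orthogonal_def)
  then have "{i. z \<bullet> m i \<noteq> 0} = UNIV - {i. m i \<in> span S}"
    "{j. z \<bullet> w j \<noteq> 0} = UNIV - {j. w j \<in> span S}" by auto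
  moreover have "card (UNIV - {i. f i \<in> span S}) = CARD('j) - card {i. f i \<in> span S}"
    for f :: "'j \<Rightarrow> 'a"
    by (rule card_Diff_subset) auto
  moreover have "card {i. f i \<in> span S} \<le> CARD('j)" for f :: "'j \<Rightarrow> 'a"
    by (rule card_mono) auto
  ultimately have "min (CARD('j) - card {j. w j \<in> span S}) (CARD('j) + 2 - k) \<le>
      CARD('j) - card {i. m i \<in> span S}"
    using KEY unfolding kruskal_permutation_condition_def by metis
  then have "CARD('j) - card {j. w j \<in> span S} \<le> CARD('j) - card {i. m i \<in> span S} \<or>
      CARD('j) + 2 - k \<le> CARD('j) - card {i. m i \<in> span S}"
    by (simp only: min_le_iff_disj)
  then show ?thesis using many card_mono[of UNIV "{i. m i \<in> span S}"]
      card_mono[of UNIV "{j. w j \<in> span S}"] by auto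
qed

lemma le_dim_range_if_kruskal_permutation_condition:
  fixes w m :: "'j::finite \<Rightarrow> 'a::euclidean_space"
  assumes KEY: "kruskal_permutation_condition k w m"
    and KW: "kruskal_indep k w" and k: "k \<le> CARD('j)"
  shows "k \<le> dim (range m)"
proof -
  have "card {i. m i \<in> span (range m)} \<le> card {j. w j \<in> span (range m)}"
    by (rule card_in_span_le_if_many[OF KEY]) (use k in \<open>simp add: span_base\<close>)
  then have "CARD('j) \<le> card {j. w j \<in> span (range m)}" by (simp add: span_base)
  then have "{j. w j \<in> span (range m)} = UNIV" by (rule card_seteq[rotated 2]) auto
  then have span_w: "range w \<subseteq> span (range m)" by auto
  obtain S :: "'j set" where S: "card S = k" "finite S"
    using obtain_subset_with_card_n[of k UNIV] k by auto
  then have "inj_on w S" "independent (w ` S)" using kruskal_indepD[OF KW] by auto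
  moreover have "w ` S \<subseteq> span (range m)" using span_w by auto
  ultimately have "card (w ` S) \<le> dim (span (range m))" using independent_card_le_dim by blast
  then show ?thesis using S \<open>inj_on w S\<close> by (simp add: card_image)
qed

lemma span_insert_exchange:
  assumes "v \<in> span (insert x B)" "v \<notin> span B"
  shows "span (insert v B) = span (insert x B)"
proof
  show "span (insert v B) \<subseteq> span (insert x B)"
    using assms(1) by (intro span_minimal) (auto intro: span_base subspace_span)
  have "x \<in> span (insert v B)" using in_span_insert[OF assms] .
  then show "span (insert x B) \<subseteq> span (insert v B)"
    by (intro span_minimal) (auto intro: span_base subspace_span)
qed

lemma two_le_card_span_insert:
  fixes m :: "'j::finite \<Rightarrow> 'a::euclidean_space"
  assumes "dim B + 2 \<le> dim (range m)"
  shows "2 \<le> card ((\<lambda>i. span (insert (m i) B)) ` {i. m i \<notin> span B})"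
proof (rule ccontr)
  define E where "E i = span (insert (m i) B)" for i
  define Out where "Out = {i. m i \<notin> span B}"
  assume "\<not> 2 \<le> card ((\<lambda>i. span (insert (m i) B)) ` {i. m i \<notin> span B})"
  then have few: "card (E ` Out) \<le> Suc 0" unfolding E_def Out_def by simp
  have "Out \<noteq> {}"
  proof
    assume "Out = {}"
    then have "dim (range m) \<le> dim (span B)" unfolding Out_def by (intro dim_subset) auto
    with assms show False by simp
  qed
  then obtain i0 where i0: "i0 \<in> Out" by blast
  have "\<forall>F\<in>E ` Out. \<forall>G\<in>E ` Out. F = G"
    using few by (subst card_le_Suc0_iff_eq[symmetric]) auto
  then have "E i = E i0" if "i \<in> Out" for i using that i0 by blast
  moreover have "span B \<subseteq> E i0" unfolding E_def by (intro span_mono) auto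
  ultimately have "range m \<subseteq> E i0" unfolding Out_def by (auto simp: E_def intro: span_base)
  then have "dim (range m) \<le> dim (insert (m i0) B)" unfolding E_def by (metis dim_subset dim_span)
  with assms show False by (simp add: dim_insert split: if_splits)
qed

lemma card_in_span_le:
  fixes w m :: "'j::finite \<Rightarrow> 'a::euclidean_space"
  assumes KEY: "kruskal_permutation_condition k w m"
    and KW: "kruskal_indep k w" and k: "k \<le> CARD('j)"
  shows "card {i. m i \<in> span (m ` T)} \<le> card {j. w j \<in> span (m ` T)}"
proof (induction "k - 1 - dim (m ` T)" arbitrary: T rule: less_induct)
  case less
  show ?case
  proof (cases "k - 1 \<le> dim (m ` T)")
    case True
    have "dim (m ` T) \<le> card (m ` {i. m i \<in> span (m ` T)})"
      by (rule dim_le_card) (auto intro: span_base)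
    also have "\<dots> \<le> card {i. m i \<in> span (m ` T)}" by (rule card_image_le) simp
    finally show ?thesis using True by (intro card_in_span_le_if_many[OF KEY]) simp
  next
    case False
    define E where "E i = span (insert (m i) (m ` T))" for i
    define Out where "Out = {i. m i \<notin> span (m ` T)}"
    have "k \<le> dim (range m)" by (rule le_dim_range_if_kruskal_permutation_condition[OF KEY KW k])
    then have two: "2 \<le> card (E ` Out)"
      unfolding E_def Out_def using False by (intro two_le_card_span_insert) simp
    show ?thesis
    proof (rule card_le_card_if_cover[OF _ two])
      show "span (m ` T) \<subseteq> F" if "F \<in> E ` Out" for F
        using that unfolding E_def by (auto intro: span_mono[THEN subsetD])
      show "F \<inter> G \<subseteq> span (m ` T)" if FG: "F \<in> E ` Out" "G \<in> E ` Out" "F \<noteq> G" for F G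
      proof
        fix v assume v: "v \<in> F \<inter> G"
        show "v \<in> span (m ` T)"
        proof (rule ccontr)
          assume v_out: "v \<notin> span (m ` T)"
          have "H = span (insert v (m ` T))" if "H \<in> E ` Out" "v \<in> H" for H
          proof -
            obtain i where "H = E i" using \<open>H \<in> E ` Out\<close> by blast
            with that(2) show ?thesis using span_insert_exchange[OF _ v_out] unfolding E_def by simp
          qed
          with FG v show False by auto
        qed
      qed
      show "\<exists>F\<in>E ` Out. m i \<in> F" if "m i \<notin> span (m ` T)" for i
        using that unfolding Out_def E_def by (auto intro: span_base)
      show "card {i. m i \<in> F} \<le> card {j. w j \<in> F}" if F: "F \<in> E ` Out" for F
      proof -
        obtain i where i: "i \<in> Out" "F = E i" using F by blast
        then have "k - 1 - dim (m ` insert i T) < k - 1 - dim (m ` T)"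
          using False unfolding Out_def by (simp add: dim_insert)
        moreover have "F = span (m ` insert i T)" using i(2) unfolding E_def by simp
        ultimately show ?thesis using less.hyps by blast
      qed
    qed simp
  qed
qed

lemma kruskal_indep_card_in_line:
  fixes w :: "'j::finite \<Rightarrow> 'a::euclidean_space"
  assumes KW: "kruskal_indep k w" and k: "2 \<le> k"
  shows "card {j. w j \<in> span {v}} \<le> 1"
proof -
  have "j1 = j2" if "w j1 \<in> span {v}" "w j2 \<in> span {v}" for j1 j2
  proof (rule ccontr)
    assume "j1 \<noteq> j2"
    then have "inj_on w {j1, j2}" "independent (w ` {j1, j2})"
      using kruskal_indepD[OF KW, of "{j1, j2}"] k by auto
    moreover have "w ` {j1, j2} \<subseteq> span {v}" using that by auto
    ultimately have "card (w ` {j1, j2}) \<le> dim (span {v})" using independent_card_le_dim by blast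
    also have "\<dots> \<le> 1" using dim_le_card[of "span {v}" "{v}"] by simp
    finally show False using \<open>inj_on w {j1, j2}\<close> \<open>j1 \<noteq> j2\<close> by (simp add: card_image)
  qed
  then show ?thesis by (simp add: card_le_Suc0_iff_eq)
qed

lemma kruskal_permutation_lemma:
  fixes w m :: "'j::finite \<Rightarrow> 'a::euclidean_space"
  assumes KEY: "kruskal_permutation_condition k w m"
    and KW: "kruskal_indep k w" and k: "2 \<le> k" "k \<le> CARD('j)"
  obtains \<pi> c where "bij \<pi>" "\<And>i. c i \<noteq> 0" "\<And>i. m i = c i *\<^sub>R w (\<pi> i)"
proof -
  have line: "card {i'. m i' \<in> span {m i}} \<le> card {j. w j \<in> span {m i}}" for i
    using card_in_span_le[OF KEY KW k(2), of "{i}"] by simp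
  have m_line: "{i'. m i' \<in> span {m i}} = {i}" for i
  proof -
    have "card {i'. m i' \<in> span {m i}} \<le> 1"
      using line[of i] kruskal_indep_card_in_line[OF KW k(1)] le_trans by blast
    moreover have "i \<in> {i'. m i' \<in> span {m i}}" by (simp add: span_base)
    ultimately show ?thesis by (auto simp: card_le_Suc0_iff_eq)
  qed
  have "{j. w j \<in> span {m i}} \<noteq> {}" for i
    using line[of i] m_line[of i] by (intro notI) simp
  then have "\<exists>j. w j \<in> span {m i}" for i by blast
  then obtain \<pi> where \<pi>: "w (\<pi> i) \<in> span {m i}" for i by metis
  have "\<exists>c. c \<noteq> 0 \<and> m i = c *\<^sub>R w (\<pi> i)" for i
  proof -
    obtain t where t: "w (\<pi> i) = t *\<^sub>R m i" using \<pi>[of i] by (auto simp: span_singleton)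
    then have "t \<noteq> 0" using kruskal_indep_nonzero[OF KW] k by auto
    with t show ?thesis by (intro exI[of _ "inverse t"]) simp
  qed
  then obtain c where c: "\<And>i. c i \<noteq> 0" "\<And>i. m i = c i *\<^sub>R w (\<pi> i)" by metis
  have "inj \<pi>"
  proof (rule injI)
    fix i i' assume "\<pi> i = \<pi> i'"
    then have "i' \<in> {i'. m i' \<in> span {m i}}" using c(2)[of i'] \<pi>[of i] by (simp add: span_mul)
    then show "i = i'" unfolding m_line by simp
  qed
  then have "bij \<pi>" by (simp add: bij_def finite_UNIV_inj_surj)
  with c show thesis using that by blast
qed

lemma power_sum_decomposition_unique:
  fixes w m :: "'j::finite \<Rightarrow> 'a::euclidean_space" and a b :: "'j \<Rightarrow> 'b::euclidean_space"
  assumes ID: "\<And>l x. (\<Sum>j\<in>UNIV. (l \<bullet> a j) * (w j \<bullet> x) ^ r) =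
                     (\<Sum>j\<in>UNIV. (l \<bullet> b j) * (m j \<bullet> x) ^ r)"
    and KW: "kruskal_indep k1 w" and KA: "kruskal_indep k2 a"
    and k: "2 \<le> k1" "2 \<le> k2" "k1 \<le> CARD('j)" "k2 \<le> CARD('j)"
    and rk: "2 * CARD('j) \<le> r * (k1 - 1) + k2"
  obtains \<pi> c where "bij \<pi>" "\<And>i. c i \<noteq> 0" "\<And>i. m i = c i *\<^sub>R w (\<pi> i)"
    "\<And>i. c i ^ r *\<^sub>R b i = a (\<pi> i)"
proof -
  obtain \<pi> c where \<pi>: "bij \<pi>" and c: "\<And>i. c i \<noteq> 0" "\<And>i. m i = c i *\<^sub>R w (\<pi> i)"
    using kruskal_permutation_lemma[OF
        kruskal_permutation_condition_if_power_sums_eq[OF ID KW KA k rk] KW k(1,3)] by blast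
  have KW\<pi>: "kruskal_indep k1 (w \<circ> \<pi>)" by (rule kruskal_indep_comp[OF KW bij_is_inj[OF \<pi>]])
  have card: "card (UNIV :: 'j set) \<le> r * (k1 - 1) + 1" using rk k(4) by linarith
  have "(\<Sum>i\<in>UNIV. (l \<bullet> (a (\<pi> i) - c i ^ r *\<^sub>R b i)) * ((w \<circ> \<pi>) i \<bullet> x) ^ r) = 0" for l x
  proof -
    have "(\<Sum>j\<in>UNIV. (l \<bullet> a j) * (w j \<bullet> x) ^ r) = (\<Sum>i\<in>UNIV. (l \<bullet> a (\<pi> i)) * (w (\<pi> i) \<bullet> x) ^ r)"
      by (rule sum.reindex_bij_betw[symmetric]) (use \<pi> in \<open>simp add: bij_def\<close>)
    moreover have "(\<Sum>j\<in>UNIV. (l \<bullet> b j) * (m j \<bullet> x) ^ r) =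
        (\<Sum>i\<in>UNIV. (l \<bullet> b i) * c i ^ r * (w (\<pi> i) \<bullet> x) ^ r)"
      by (simp add: c(2) power_mult_distrib mult.assoc)
    moreover have "(\<Sum>i\<in>UNIV. (l \<bullet> (a (\<pi> i) - c i ^ r *\<^sub>R b i)) * ((w \<circ> \<pi>) i \<bullet> x) ^ r) =
        (\<Sum>i\<in>UNIV. (l \<bullet> a (\<pi> i)) * (w (\<pi> i) \<bullet> x) ^ r) -
        (\<Sum>i\<in>UNIV. (l \<bullet> b i) * c i ^ r * (w (\<pi> i) \<bullet> x) ^ r)"
      unfolding sum_subtractf[symmetric]
      by (rule sum.cong) (simp_all add: inner_diff_right algebra_simps)
    ultimately show ?thesis using ID[of l x] by simp
  qed
  then have "l \<bullet> (a (\<pi> i) - c i ^ r *\<^sub>R b i) = 0" for l i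
    using power_sum_zero_imp_coeffs_zero[OF KW\<pi> _ _ card,
        where c = "\<lambda>i. l \<bullet> (a (\<pi> i) - c i ^ r *\<^sub>R b i)"] k(1) by simp
  then have "c i ^ r *\<^sub>R b i = a (\<pi> i)" for i
    by (metis inner_eq_zero_iff eq_iff_diff_eq_0)
  with \<pi> c show thesis using that by blast
qed

section \<open>Two-layer networks\<close>

lemma inner_hpnn2:
  fixes W1 :: "real^'d0^'d1" and W2 :: "real^'d1^'d2"
  shows "l \<bullet> hpnn2 W1 W2 r x = (\<Sum>j\<in>UNIV. (l \<bullet> column j W2) * (W1 $ j \<bullet> x) ^ r)"
proof -
  have "l \<bullet> hpnn2 W1 W2 r x = (\<Sum>k\<in>UNIV. \<Sum>j\<in>UNIV. l $ k * (W2 $ k $ j * (W1 $ j \<bullet> x) ^ r))"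
    unfolding hpnn2_def rho_def
    by (simp add: inner_vec_def matrix_vector_mult_def sum_distrib_left)
  also have "\<dots> = (\<Sum>j\<in>UNIV. (\<Sum>k\<in>UNIV. l $ k * W2 $ k $ j) * (W1 $ j \<bullet> x) ^ r)"
    by (subst sum.swap) (simp add: sum_distrib_right mult.assoc)
  also have "\<dots> = (\<Sum>j\<in>UNIV. (l \<bullet> column j W2) * (W1 $ j \<bullet> x) ^ r)"
    by (simp add: inner_vec_def column_def)
  finally show ?thesis .
qed

lemma column_matrix_mult_diagm: "column j (A ** diagm d) = d $ j *\<^sub>R column j A"
proof -
  have "(A ** diagm d) $ k $ j = (\<Sum>m\<in>UNIV. if m = j then A $ k $ m * d $ m else 0)" for k
    unfolding matrix_matrix_mult_def diagm_def by (simp only: vec_lambda_beta, rule sum.cong, auto)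
  then show ?thesis by (simp add: vec_eq_iff column_def)
qed

lemma diagm_matrix_mult_row: "(diagm d ** A) $ i = d $ i *\<^sub>R A $ i"
proof -
  have "(diagm d ** A) $ i $ k = (\<Sum>m\<in>UNIV. if m = i then d $ m * A $ m $ k else 0)" for k
    unfolding matrix_matrix_mult_def diagm_def by (simp only: vec_lambda_beta, rule sum.cong, auto)
  then show ?thesis by (simp add: vec_eq_iff)
qed

lemma perm_matrix_mult_row: "((\<chi> i j. if j = \<pi> i then 1 else 0) ** A) $ i = A $ \<pi> i"
proof -
  have "((\<chi> i j. if j = \<pi> i then 1 else 0) ** A) $ i $ k =
      (\<Sum>m\<in>UNIV. if m = \<pi> i then A $ m $ k else 0)" for k
    unfolding matrix_matrix_mult_def by (simp only: vec_lambda_beta, rule sum.cong, auto)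
  then show ?thesis by (simp add: vec_eq_iff)
qed

lemma column_matrix_mult_transpose_perm:
  "column i (A ** transpose (\<chi> i j. if j = \<pi> i then 1 else 0)) = column (\<pi> i) A"
proof -
  have "(A ** transpose (\<chi> i j. if j = \<pi> i then 1 else 0)) $ k $ i =
      (\<Sum>m\<in>UNIV. if m = \<pi> i then A $ k $ m else 0)" for k
    unfolding matrix_matrix_mult_def transpose_def
    by (simp only: vec_lambda_beta, rule sum.cong, auto)
  then show ?thesis by (simp add: vec_eq_iff column_def)
qed

lemma hpnn2_equiv_if_rescaled_permutation:
  fixes W1 W1' :: "real^'d0^'d1" and W2 W2' :: "real^'d1^'d2"
  assumes \<pi>: "bij \<pi>" and c: "\<And>i. c i \<noteq> 0"
    and rows: "\<And>i. W1' $ i = c i *\<^sub>R W1 $ \<pi> i"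
    and cols: "\<And>i. c i ^ r *\<^sub>R column i W2' = column (\<pi> i) W2"
  shows "hpnn2_equiv r W1' W2' W1 W2"
proof -
  define P :: "real^'d1^'d1" where "P = (\<chi> i j. if j = \<pi> i then 1 else 0)"
  define d :: "real^'d1" where "d = (\<chi> j. c (inv \<pi> j))"
  have d\<pi>: "d $ \<pi> i = c i" for i using bij_is_inj[OF \<pi>] by (simp add: d_def)
  have "perm_matrix P"
    unfolding perm_matrix_def P_def using bij_imp_permutes[of \<pi> UNIV] \<pi> by auto
  moreover have "\<forall>j. d $ j \<noteq> 0" using c by (simp add: d_def)
  moreover have "W1' = P ** diagm d ** W1"
  proof -
    have "(P ** diagm d ** W1) $ i = W1' $ i" for i
      by (simp add: matrix_mul_assoc[symmetric] P_def perm_matrix_mult_row diagm_matrix_mult_row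
          d\<pi> rows)
    then show ?thesis by (simp add: vec_eq_iff)
  qed
  moreover have "W2' = W2 ** diagm (\<chi> j. inverse (d $ j) ^ r) ** transpose P"
  proof -
    have "column i W2' = inverse (c i ^ r) *\<^sub>R column (\<pi> i) W2" for i
      using c[of i] by (simp flip: cols)
    then have "column i (W2 ** diagm (\<chi> j. inverse (d $ j) ^ r) ** transpose P) = column i W2'"
      for i
      by (simp add: P_def column_matrix_mult_transpose_perm column_matrix_mult_diagm d\<pi>
          power_inverse)
    then show ?thesis by (simp add: vec_eq_iff column_def)
  qed
  ultimately show ?thesis unfolding hpnn2_equiv_def by blast
qed

lemma krank_attained:
  fixes A :: "real^'c^'m"
  shows "krank A \<le> CARD('c) \<and> (\<forall>S::'c set. card S = krank A \<longrightarrow>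
     inj_on (\<lambda>j. column j A) S \<and> independent ((\<lambda>j. column j A) ` S))"
proof -
  let ?K = "{k. k \<le> CARD('c) \<and> (\<forall>S::'c set. card S = k \<longrightarrow>
     inj_on (\<lambda>j. column j A) S \<and> independent ((\<lambda>j. column j A) ` S))}"
  have "finite ?K" by (rule finite_subset[of _ "{..CARD('c)}"]) auto
  moreover have "0 \<in> ?K" by (simp add: card_eq_0_iff independent_empty)
  ultimately have "Max ?K \<in> ?K" by (intro Max_in) auto
  then show ?thesis unfolding krank_def by (rule CollectD)
qed

lemma krank_le_card: "krank (A :: real^'c^'m) \<le> CARD('c)"
  using krank_attained by blast

lemma kruskal_indep_krank:
  fixes A :: "real^'c^'m"
  shows "kruskal_indep (krank A) (\<lambda>j. column j A)"
  unfolding kruskal_indep_def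
proof (intro allI impI)
  fix S :: "'c set" assume S: "finite S \<and> card S \<le> krank A"
  have "krank A - card S \<le> card (UNIV - S)"
    using krank_le_card[of A] S by (simp add: card_Diff_subset)
  then obtain T where T: "T \<subseteq> UNIV - S" "card T = krank A - card S" "finite T"
    by (rule obtain_subset_with_card_n)
  have "card (S \<union> T) = krank A" using T S by (subst card_Un_disjoint) auto
  then have "inj_on (\<lambda>j. column j A) (S \<union> T) \<and> independent ((\<lambda>j. column j A) ` (S \<union> T))"
    using krank_attained[of A] by blast
  then show "inj_on (\<lambda>j. column j A) S \<and> independent ((\<lambda>j. column j A) ` S)"
    by (meson Un_upper1 image_mono independent_mono inj_on_subset)
qed

lemma nat_bound_of_ceiling_bound:
  fixes R r k1 k2 :: nat
  assumes "2 \<le> k1" and "int r \<ge> 2 * \<lceil>(2 * real R - real k2) / (2 * real k1 - 2)\<rceil>"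
  shows "2 * R \<le> r * (k1 - 1) + k2"
proof -
  define X where "X = (2 * real R - real k2) / (2 * real k1 - 2)"
  have "real r \<ge> 2 * X"
    using assms(2) le_of_int_ceiling[of X] unfolding X_def by linarith
  moreover have "2 * X = (2 * real R - real k2) / (real k1 - 1)"
    unfolding X_def using assms(1) by (simp add: field_simps)
  ultimately have "2 * real R - real k2 \<le> real r * (real k1 - 1)"
    using assms(1) by (simp add: divide_le_eq)
  then have "real (2 * R) \<le> real (r * (k1 - 1) + k2)" using assms(1) by (simp add: of_nat_diff)
  then show ?thesis by (simp only: of_nat_le_iff)
qed

theorem mainTheorem14:
  fixes W1 :: "real^'d0^'d1" and W2 :: "real^'d1^'d2" and r :: nat
  assumes "CARD('d0) \<ge> 2" and "CARD('d1) \<ge> 2" and "CARD('d2) \<ge> 2"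
    and "r \<ge> 2"
    and "krank W2 \<ge> 2" and "krank (transpose W1) \<ge> 2"
    and "int r \<ge> 2 * \<lceil>(2 * real CARD('d1) - real (krank W2)) /
                          (2 * real (krank (transpose W1)) - 2)\<rceil>"
  shows "hpnn2_unique r W1 W2"
  unfolding hpnn2_unique_def
proof (intro allI impI)
  fix W1' :: "real^'d0^'d1" and W2' :: "real^'d1^'d2"
  assume eq: "hpnn2 W1' W2' r = hpnn2 W1 W2 r"
  have ID: "(\<Sum>j\<in>UNIV. (l \<bullet> column j W2) * (W1 $ j \<bullet> x) ^ r) =
      (\<Sum>j\<in>UNIV. (l \<bullet> column j W2') * (W1' $ j \<bullet> x) ^ r)" for l x
    using arg_cong[OF eq, of "\<lambda>f. l \<bullet> f x"] unfolding inner_hpnn2 by (rule sym)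
  have KW: "kruskal_indep (krank (transpose W1)) (\<lambda>j. W1 $ j)"
    using kruskal_indep_krank[of "transpose W1"] by (simp add: row_def)
  have rk: "2 * CARD('d1) \<le> r * (krank (transpose W1) - 1) + krank W2"
    by (rule nat_bound_of_ceiling_bound) (use assms in auto)
  obtain \<pi> c where \<pi>: "bij \<pi>" and c: "\<And>i. c i \<noteq> 0"
    and rows: "\<And>i. W1' $ i = c i *\<^sub>R W1 $ \<pi> i"
    and cols: "\<And>i. c i ^ r *\<^sub>R column i W2' = column (\<pi> i) W2"
    using power_sum_decomposition_unique[OF ID KW kruskal_indep_krank assms(6,5)
          krank_le_card krank_le_card rk] by blast
  show "hpnn2_equiv r W1' W2' W1 W2"
    by (rule hpnn2_equiv_if_rescaled_permutation[OF \<pi> c rows cols])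
qed

end
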